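(* Let $p$ be a prime and $G$ a $p$-group of order $p^m$ with $|G/Z(G)|=p^2$. Then $$B_G(t)=\frac{1-p^{m-3}t}{(1-p^{m-2}t)(1-p^{m-1}t)}.$$
   Context: For a finite group $G$ and $n\ge0$, let $G^{(n)}=\{(x_1,\dots,x_n)\in G^n: x_ix_j=x_jx_i\ \forall i,j\}$, on which $G$ acts by simultaneous conjugation; let $\beta_{G,n}$ be the number of orbits and $B_G(t)=\sum_{n\ge0}\beta_{G,n}t^n$, viewed as a rational function of $t$. *)

theory Defs
  imports "HOL-Algebra.Coset" "HOL-Computational_Algebra.Formal_Power_Series"
begin

definition grp_center :: "('a, 'b) monoid_scheme \<Rightarrow> 'a set" where
  "grp_center G = {z \<in> carrier G. \<forall>g \<in> carrier G. z \<otimes>\<^bsub>G\<^esub> g = g \<otimes>\<^bsub>G\<^esub> z}"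

definition commuting_tuples :: "('a, 'b) monoid_scheme \<Rightarrow> nat \<Rightarrow> 'a list set" where
  "commuting_tuples G n = {xs. length xs = n \<and> set xs \<subseteq> carrier G \<and>
     (\<forall>i<n. \<forall>j<n. xs ! i \<otimes>\<^bsub>G\<^esub> xs ! j = xs ! j \<otimes>\<^bsub>G\<^esub> xs ! i)}"

definition conj_orbit :: "('a, 'b) monoid_scheme \<Rightarrow> 'a list \<Rightarrow> 'a list set" where
  "conj_orbit G xs = {map (\<lambda>x. g \<otimes>\<^bsub>G\<^esub> x \<otimes>\<^bsub>G\<^esub> inv\<^bsub>G\<^esub> g) xs | g. g \<in> carrier G}"

definition beta :: "('a, 'b) monoid_scheme \<Rightarrow> nat \<Rightarrow> nat" where
  "beta G n = card (conj_orbit G ` commuting_tuples G n)"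

definition B_series :: "('a, 'b) monoid_scheme \<Rightarrow> rat fps" where
  "B_series G = Abs_fps (\<lambda>n. of_nat (beta G n))"

end

(* Burnside's lemma for simultaneous conjugation gives beta_{G,n} |G| = |G^(n+1)|, because the
   n-tuples fixed by g are exactly those commuting with g.  As |G : Z(G)| = p^2, every subgroup
   strictly between Z(G) and G has order p^(m-1); so the centralizer of a commuting tuple is G if
   all its entries are central and has order p^(m-1) otherwise.  Counting the possible new first
   entries gives |G^(n+1)| = p^(m-1) |G^(n)| + (p^m - p^(m-1)) p^((m-2)n), whence
   |G^(n)| = (p+1) p^((m-1)n) - p p^((m-2)n).  Thus beta_{G,n} is a combination of two geometric
   sequences, and its generating function is the stated rational function. *)

theory Submission
  imports Defs "HOL-Algebra.Group_Action"
begin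

lemma fps_two_geometric:
  fixes u v a c :: "'a::field_char_0"
  shows "Abs_fps (\<lambda>n. u * a ^ n + v * c ^ n) =
    (fps_const (u + v) - fps_const (u * c + v * a) * fps_X) /
    ((1 - fps_const a * fps_X) * (1 - fps_const c * fps_X))"
proof -
  define Da Dc where "Da = 1 - fps_const a * fps_X" and "Dc = 1 - fps_const c * fps_X"
  have geom: "inverse (1 - fps_const b * fps_X) = Abs_fps (\<lambda>n. b ^ n)" for b :: 'a
    using one_minus_const_fps_X_neg_power'[of 1 b] by simp
  have Da: "Da * inverse Da = 1" and Dc: "Dc * inverse Dc = 1"
    unfolding Da_def Dc_def by (simp_all add: inverse_mult_eq_1')
  have "Abs_fps (\<lambda>n. u * a ^ n + v * c ^ n) = fps_const u * inverse Da + fps_const v * inverse Dc"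
    unfolding Da_def Dc_def geom by (rule fps_ext) simp
  also have "\<dots> = fps_const u * inverse Da * (Dc * inverse Dc) +
      fps_const v * inverse Dc * (Da * inverse Da)"
    by (simp only: Da Dc mult_1_right)
  also have "\<dots> = (fps_const u * Dc + fps_const v * Da) * (inverse Da * inverse Dc)"
    by (simp only: distrib_left distrib_right mult_ac)
  also have "fps_const u * Dc + fps_const v * Da =
      fps_const (u + v) - fps_const (u * c + v * a) * fps_X"
    unfolding Da_def Dc_def by (simp add: algebra_simps flip: fps_const_add fps_const_mult)
  also have "inverse Da * inverse Dc = inverse (Da * Dc)"
    unfolding Da_def Dc_def by (simp add: fps_inverse_mult)
  finally show ?thesis
    unfolding Da_def Dc_def by (simp add: fps_divide_unit)
qed

lemma group_actionI:
  fixes G (structure)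
  assumes "group G"
    and closed: "\<And>g x. g \<in> carrier G \<Longrightarrow> x \<in> E \<Longrightarrow> f g x \<in> E"
    and one: "\<And>x. x \<in> E \<Longrightarrow> f \<one> x = x"
    and mult: "\<And>g h x. g \<in> carrier G \<Longrightarrow> h \<in> carrier G \<Longrightarrow> x \<in> E \<Longrightarrow>
      f (g \<otimes> h) x = f g (f h x)"
  shows "group_action G E (\<lambda>g. restrict (f g) E)"
proof -
  interpret group G by fact
  have Bij: "restrict (f g) E \<in> Bij E" if g: "g \<in> carrier G" for g
  proof -
    have "f g (f (inv g) x) = x" "f (inv g) (f g x) = x" if "x \<in> E" for x
      using that g by (simp_all flip: mult add: one)
    then have "bij_betw (f g) E E"
      using g by (intro bij_betw_byWitness[where f' = "f (inv g)"]) (auto intro: closed)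
    then show ?thesis
      unfolding Bij_def by simp
  qed
  have "restrict (f (g \<otimes> h)) E = restrict (f g) E \<otimes>\<^bsub>BijGroup E\<^esub> restrict (f h) E"
    if "g \<in> carrier G" "h \<in> carrier G" for g h
    using that Bij by (auto simp: BijGroup_def compose_def closed mult)
  then have "(\<lambda>g. restrict (f g) E) \<in> hom G (BijGroup E)"
    using Bij by (auto intro!: homI simp: BijGroup_def)
  then show ?thesis
    unfolding group_action_def group_hom_def group_hom_axioms_def
    by (simp add: group_BijGroup)
qed

definition centralizer :: "('a, 'b) monoid_scheme \<Rightarrow> 'a set \<Rightarrow> 'a set" where
  "centralizer G S = {g \<in> carrier G. \<forall>x \<in> S. g \<otimes>\<^bsub>G\<^esub> x = x \<otimes>\<^bsub>G\<^esub> g}"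

definition tuple_conj :: "('a, 'b) monoid_scheme \<Rightarrow> 'a \<Rightarrow> 'a list \<Rightarrow> 'a list" where
  "tuple_conj G g = map (\<lambda>x. g \<otimes>\<^bsub>G\<^esub> x \<otimes>\<^bsub>G\<^esub> inv\<^bsub>G\<^esub> g)"

context group
begin

lemma commute_inv:
  assumes "g \<in> carrier G" "x \<in> carrier G" "g \<otimes> x = x \<otimes> g"
  shows "inv g \<otimes> x = x \<otimes> inv g"
  using assms by (simp add: inv_solve_left' flip: m_assoc) (simp add: m_assoc)

lemma commute_mult:
  assumes "g \<in> carrier G" "h \<in> carrier G" "x \<in> carrier G"
    and "g \<otimes> x = x \<otimes> g" "h \<otimes> x = x \<otimes> h"
  shows "g \<otimes> h \<otimes> x = x \<otimes> (g \<otimes> h)"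
proof -
  have "g \<otimes> h \<otimes> x = g \<otimes> (x \<otimes> h)" using assms by (simp add: m_assoc)
  also have "\<dots> = x \<otimes> (g \<otimes> h)" using assms by (simp flip: m_assoc)
  finally show ?thesis .
qed

lemma centralizer_subgroup:
  assumes "S \<subseteq> carrier G"
  shows "subgroup (centralizer G S) G"
  using assms by unfold_locales (auto simp: centralizer_def commute_inv commute_mult subset_iff)

lemma grp_center_eq_centralizer: "grp_center G = centralizer G (carrier G)"
  unfolding grp_center_def centralizer_def by (auto intro: sym)

lemma commuting_tuples_iff:
  "t \<in> commuting_tuples G n \<longleftrightarrow>
     length t = n \<and> set t \<subseteq> carrier G \<and> (\<forall>x \<in> set t. \<forall>y \<in> set t. x \<otimes> y = y \<otimes> x)"
  unfolding commuting_tuples_def by (auto simp: in_set_conv_nth) (meson nth_mem)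

lemma Cons_commuting_tuples_iff:
  "g # t \<in> commuting_tuples G (Suc n) \<longleftrightarrow>
     t \<in> commuting_tuples G n \<and> g \<in> centralizer G (set t)"
  unfolding commuting_tuples_iff centralizer_def by (auto intro: sym)

lemma finite_commuting_tuples:
  assumes "finite (carrier G)"
  shows "finite (commuting_tuples G n)"
  using finite_lists_length_eq[OF assms, of n]
  by (rule finite_subset[rotated]) (auto simp: commuting_tuples_iff)

lemma card_commuting_tuples_Suc:
  assumes "finite (carrier G)"
  shows "card (commuting_tuples G (Suc n)) =
    (\<Sum>t \<in> commuting_tuples G n. card (centralizer G (set t)))"
proof -
  have "commuting_tuples G (Suc n) =
      (\<lambda>(t, g). g # t) ` (SIGMA t : commuting_tuples G n. centralizer G (set t))"
  proof (intro equalityI subsetI)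
    fix s assume s: "s \<in> commuting_tuples G (Suc n)"
    then obtain g t where "s = g # t"
      by (cases s) (auto simp: commuting_tuples_def)
    with s show "s \<in> (\<lambda>(t, g). g # t) ` (SIGMA t : commuting_tuples G n. centralizer G (set t))"
      by (force simp: Cons_commuting_tuples_iff)
  qed (auto simp: Cons_commuting_tuples_iff)
  moreover have "inj_on (\<lambda>(t, g). g # t) (SIGMA t : commuting_tuples G n. centralizer G (set t))"
    by (auto simp: inj_on_def)
  moreover have "finite (centralizer G S)" for S
    using assms by (simp add: centralizer_def)
  ultimately show ?thesis
    using assms by (simp add: card_image finite_commuting_tuples)
qed

lemma tuple_conj_commuting_tuples:
  assumes "g \<in> carrier G" and "t \<in> commuting_tuples G n"
  shows "tuple_conj G g t \<in> commuting_tuples G n"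
proof -
  have "g \<otimes> x \<otimes> inv g \<otimes> (g \<otimes> y \<otimes> inv g) = g \<otimes> (x \<otimes> y) \<otimes> inv g"
    if "x \<in> carrier G" "y \<in> carrier G" for x y
    using that assms(1) by (simp add: m_assoc inv_solve_left')
  with assms show ?thesis
    unfolding commuting_tuples_iff tuple_conj_def by (auto simp: subset_iff)
qed

lemma tuple_conj_action:
  "group_action G (commuting_tuples G n) (\<lambda>g. restrict (tuple_conj G g) (commuting_tuples G n))"
proof (rule group_actionI)
  show "tuple_conj G g t \<in> commuting_tuples G n"
    if "g \<in> carrier G" "t \<in> commuting_tuples G n" for g t
    using that by (rule tuple_conj_commuting_tuples)
  show "tuple_conj G \<one> t = t" if "t \<in> commuting_tuples G n" for t
    using that by (auto simp: tuple_conj_def commuting_tuples_iff subset_iff intro: map_idI)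
  show "tuple_conj G (g \<otimes> h) t = tuple_conj G g (tuple_conj G h t)"
    if "g \<in> carrier G" "h \<in> carrier G" "t \<in> commuting_tuples G n" for g h t
    using that by (auto simp: tuple_conj_def commuting_tuples_iff m_assoc inv_mult_group subset_iff)
qed (rule is_group)

lemma tuple_conj_eq_self_iff:
  assumes "g \<in> carrier G" and "set t \<subseteq> carrier G"
  shows "tuple_conj G g t = t \<longleftrightarrow> g \<in> centralizer G (set t)"
proof -
  have "g \<otimes> x \<otimes> inv g = x \<longleftrightarrow> g \<otimes> x = x \<otimes> g" if "x \<in> carrier G" for x
    using assms(1) that by (metis inv_solve_right m_closed inv_closed)
  with assms show ?thesis
    unfolding tuple_conj_def centralizer_def map_eq_conv[where g = id, simplified]
    by (auto simp: subset_iff)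
qed

lemma beta_eq_card_orbits:
  "beta G n = card (orbits G (commuting_tuples G n)
     (\<lambda>g. restrict (tuple_conj G g) (commuting_tuples G n)))"
proof -
  have "conj_orbit G t = orbit G (\<lambda>g. restrict (tuple_conj G g) (commuting_tuples G n)) t"
    if "t \<in> commuting_tuples G n" for t
    using that unfolding conj_orbit_def orbit_def tuple_conj_def by auto
  then show ?thesis
    unfolding beta_def orbits_def Setcompr_eq_image
    by (intro arg_cong[where f = card] image_cong) auto
qed

theorem card_commuting_tuples_Suc_eq_beta:
  assumes fin: "finite (carrier G)"
  shows "card (commuting_tuples G (Suc n)) = beta G n * order G"
proof -
  let ?T = "commuting_tuples G n"
  let ?\<phi> = "\<lambda>g. restrict (tuple_conj G g) ?T"
  interpret group_action G ?T ?\<phi> by (rule tuple_conj_action)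
  have fixed: "invariants ?T ?\<phi> g = {t \<in> ?T. g \<in> centralizer G (set t)}" if "g \<in> carrier G" for g
    using that tuple_conj_eq_self_iff by (auto simp: invariants_def commuting_tuples_iff)
  have "card (commuting_tuples G (Suc n)) =
      (\<Sum>t \<in> ?T. card {g \<in> carrier G. g \<in> centralizer G (set t)})"
    using fin by (simp add: card_commuting_tuples_Suc centralizer_def)
  also have "\<dots> = (\<Sum>g \<in> carrier G. card {t \<in> ?T. g \<in> centralizer G (set t)})"
    unfolding card_eq_sum by (rule sum.swap_restrict[OF finite_commuting_tuples[OF fin] fin])
  also have "\<dots> = (\<Sum>g \<in> carrier G. card (invariants ?T ?\<phi> g))"
    by (simp add: fixed)
  also have "\<dots> = beta G n * order G"
    using burnside fin finite_commuting_tuples by (simp add: beta_eq_card_orbits)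
  finally show ?thesis .
qed

end

locale center_index_prime_square = group G for G (structure) +
  fixes p m :: nat
  assumes prime_p: "prime p"
    and finite_carrier: "finite (carrier G)"
    and card_carrier: "card (carrier G) = p ^ m"
    and card_center_cosets: "card (rcosets (grp_center G)) = p ^ 2"
begin

lemma one_less_p: "1 < p"
  using prime_p prime_gt_1_nat by blast

lemma center_subgroup: "subgroup (grp_center G) G"
  by (simp add: grp_center_eq_centralizer centralizer_subgroup)

lemma card_subgroup_eq_power:
  assumes "subgroup H G"
  obtains i where "i \<le> m" and "card H = p ^ i"
proof -
  have "card (rcosets H) * card H = p ^ m"
    using lagrange[OF assms] card_carrier by (simp add: order_def)
  then have "card H dvd p ^ m"
    by (metis dvd_triv_right)
  then show ?thesis
    using that divides_primepow_nat[OF prime_p] by blast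
qed

lemma card_center: "card (grp_center G) = p ^ (m - 2)" and two_le_m: "2 \<le> m"
proof -
  obtain i where i: "i \<le> m" "card (grp_center G) = p ^ i"
    using card_subgroup_eq_power[OF center_subgroup] .
  have "p ^ 2 * p ^ i = p ^ m"
    using lagrange[OF center_subgroup] card_carrier card_center_cosets i by (simp add: order_def)
  then have "p ^ (2 + i) = p ^ m"
    by (simp only: power_add)
  then have "2 + i = m"
    using one_less_p power_inject_exp by blast
  then show "card (grp_center G) = p ^ (m - 2)" "2 \<le> m"
    using i by auto
qed

lemma card_subgroup_between:
  assumes H: "subgroup H G" and center: "grp_center G \<subset> H" and proper: "H \<noteq> carrier G"
  shows "card H = p ^ (m - 1)"
proof -
  obtain i where i: "i \<le> m" "card H = p ^ i"
    using card_subgroup_eq_power[OF H] .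
  have "finite H"
    using finite_carrier subgroup.subset[OF H] finite_subset by blast
  then have "p ^ (m - 2) < p ^ i"
    using psubset_card_mono[OF _ center] card_center i by simp
  then have "m - 2 < i"
    using one_less_p power_less_imp_less_exp by blast
  moreover have "p ^ i < p ^ m"
    using psubset_card_mono[OF finite_carrier] subgroup.subset[OF H] proper i card_carrier
    by (metis psubsetI)
  then have "i < m"
    using one_less_p power_less_imp_less_exp by blast
  ultimately have "i = m - 1"
    by linarith
  then show ?thesis
    using i by simp
qed

lemma card_centralizer_noncentral:
  assumes "S \<subseteq> carrier G" and "S \<subseteq> centralizer G S" and "\<not> S \<subseteq> grp_center G"
  shows "card (centralizer G S) = p ^ (m - 1)"
proof (rule card_subgroup_between)
  show "subgroup (centralizer G S) G"
    using assms(1) by (rule centralizer_subgroup)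
  have "grp_center G \<subseteq> centralizer G S"
    using assms(1) unfolding grp_center_def centralizer_def by auto
  then show "grp_center G \<subset> centralizer G S"
    using assms(2,3) by blast
  show "centralizer G S \<noteq> carrier G"
  proof
    assume "centralizer G S = carrier G"
    then have "\<forall>g \<in> carrier G. \<forall>x \<in> S. g \<otimes> x = x \<otimes> g"
      unfolding centralizer_def by blast
    then have "S \<subseteq> centralizer G (carrier G)"
      using assms(1) by (auto simp: centralizer_def)
    then show False
      using assms(3) by (simp add: grp_center_eq_centralizer)
  qed
qed

lemma card_centralizer_tuple:
  assumes "t \<in> commuting_tuples G n"
  shows "card (centralizer G (set t)) = (if set t \<subseteq> grp_center G then p ^ m else p ^ (m - 1))"
proof (cases "set t \<subseteq> grp_center G")
  case True
  then have "centralizer G (set t) = carrier G"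
    unfolding centralizer_def grp_center_def by auto
  with True show ?thesis
    by (simp add: card_carrier)
next
  case False
  moreover have "set t \<subseteq> carrier G" "set t \<subseteq> centralizer G (set t)"
    using assms by (auto simp: commuting_tuples_iff centralizer_def)
  ultimately show ?thesis
    by (simp add: card_centralizer_noncentral)
qed

lemma card_central_tuples:
  "card {t \<in> commuting_tuples G n. set t \<subseteq> grp_center G} = (p ^ (m - 2)) ^ n"
proof -
  have "{t \<in> commuting_tuples G n. set t \<subseteq> grp_center G} = {t. set t \<subseteq> grp_center G \<and> length t = n}"
    unfolding commuting_tuples_iff grp_center_def by blast
  moreover have "finite (grp_center G)"
    using finite_carrier by (simp add: grp_center_def)
  ultimately show ?thesis
    by (simp add: card_lists_length_eq card_center)
qed

lemma power_m_eq: "p ^ m = p * p ^ (m - 1)" and power_m_minus_1_eq: "p ^ (m - 1) = p * p ^ (m - 2)"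
proof -
  obtain k where "m = Suc (Suc k)"
    using two_le_m by (metis add_2_eq_Suc le_Suc_ex)
  then show "p ^ m = p * p ^ (m - 1)" "p ^ (m - 1) = p * p ^ (m - 2)"
    by simp_all
qed

lemma card_commuting_tuples_Suc_rec:
  "card (commuting_tuples G (Suc n)) =
     card (commuting_tuples G n) * p ^ (m - 1) + (p ^ (m - 2)) ^ n * (p ^ m - p ^ (m - 1))"
proof -
  let ?T = "commuting_tuples G n"
  have "card (commuting_tuples G (Suc n)) =
      (\<Sum>t \<in> ?T. p ^ (m - 1) + (if set t \<subseteq> grp_center G then p ^ m - p ^ (m - 1) else 0))"
    using finite_carrier power_m_eq one_less_p
    by (auto simp: card_commuting_tuples_Suc card_centralizer_tuple intro!: sum.cong)
  also have "\<dots> = card ?T * p ^ (m - 1) +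
      card {t \<in> ?T. set t \<subseteq> grp_center G} * (p ^ m - p ^ (m - 1))"
    using finite_commuting_tuples[OF finite_carrier]
    by (simp add: sum.distrib flip: sum.inter_filter)
  finally show ?thesis
    by (simp add: card_central_tuples)
qed

lemma of_nat_card_commuting_tuples:
  "(of_nat (card (commuting_tuples G n)) :: 'c::comm_ring_1) =
     (of_nat p + 1) * of_nat (p ^ (m - 1)) ^ n - of_nat p * of_nat (p ^ (m - 2)) ^ n"
proof (induction n)
  case 0
  have "commuting_tuples G 0 = {[]}"
    by (auto simp: commuting_tuples_def)
  then show ?case
    by simp
next
  case (Suc n)
  define P A C where "P = (of_nat p :: 'c)" and "A = (of_nat (p ^ (m - 1)) :: 'c)"
    and "C = (of_nat (p ^ (m - 2)) :: 'c)"
  have A: "A = P * C"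
    unfolding P_def A_def C_def power_m_minus_1_eq by simp
  have "p ^ (m - 1) \<le> p ^ m"
    using power_m_eq one_less_p by simp
  then have "of_nat (p ^ m - p ^ (m - 1)) = (P - 1) * A"
    unfolding P_def A_def by (simp add: of_nat_diff power_m_eq algebra_simps)
  then have "(of_nat (card (commuting_tuples G (Suc n))) :: 'c) =
      ((P + 1) * A ^ n - P * C ^ n) * A + C ^ n * ((P - 1) * A)"
    by (simp add: card_commuting_tuples_Suc_rec Suc.IH P_def A_def C_def)
  also have "\<dots> = (P + 1) * A ^ Suc n - P * C ^ Suc n"
    unfolding A by (simp add: algebra_simps)
  finally show ?case
    unfolding P_def A_def C_def .
qed

lemma of_nat_beta:
  "(of_nat (beta G n) :: 'c::field_char_0) =
     (of_nat p + 1) / of_nat p * of_nat (p ^ (m - 1)) ^ n +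
     (- 1 / of_nat p) * of_nat (p ^ (m - 2)) ^ n"
proof -
  define P A C where "P = (of_nat p :: 'c)" and "A = (of_nat (p ^ (m - 1)) :: 'c)"
    and "C = (of_nat (p ^ (m - 2)) :: 'c)"
  have A: "A = P * C"
    unfolding P_def A_def C_def power_m_minus_1_eq by simp
  have "P \<noteq> 0" "C \<noteq> 0"
    using one_less_p unfolding P_def C_def by simp_all
  have "of_nat (beta G n) * (P * A) = (P + 1) * A ^ Suc n - P * C ^ Suc n"
    using card_commuting_tuples_Suc_eq_beta[OF finite_carrier, of n]
      of_nat_card_commuting_tuples[of "Suc n", where 'c = 'c]
    unfolding P_def A_def C_def order_def card_carrier power_m_eq by simp
  moreover have "((P + 1) / P * A ^ n + (- 1 / P) * C ^ n) * (P * A) =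
      (P + 1) * A ^ Suc n - P * C ^ Suc n"
    using \<open>P \<noteq> 0\<close> unfolding A by (simp add: field_simps)
  moreover have "P * A \<noteq> 0"
    using \<open>P \<noteq> 0\<close> \<open>C \<noteq> 0\<close> unfolding A by simp
  ultimately have "of_nat (beta G n) = (P + 1) / P * A ^ n + (- 1 / P) * C ^ n"
    by (metis mult_right_cancel)
  then show ?thesis
    unfolding P_def A_def C_def .
qed

(* For m = 2 the count of commuting pairs would make p^2 divide p: the class equation modulo p,
   in disguise. *)
lemma three_le_m: "3 \<le> m"
proof (rule ccontr)
  assume "\<not> 3 \<le> m"
  then have "m = 2"
    using two_le_m by simp
  then have "int (beta G 1 * p ^ 2) = (int p + 1) * int p ^ 2 - int p"
    using card_commuting_tuples_Suc_eq_beta[OF finite_carrier, of 1, unfolded Suc_1]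
      of_nat_card_commuting_tuples[of 2, where 'c = int]
    by (simp add: order_def card_carrier)
  then have "int p = int p ^ 2 * (int p + 1 - int (beta G 1))"
    by (simp add: algebra_simps)
  then have "int p ^ 2 \<le> int p"
    using one_less_p by (metis dvd_triv_left of_nat_0_less_iff zdvd_imp_le less_trans zero_less_one)
  then show False
    using one_less_p by (simp add: power2_eq_square)
qed

end

theorem theorem8p2:
  fixes G :: "('a, 'b) monoid_scheme" and p m :: nat
  assumes "group G" and "prime p" and "finite (carrier G)"
    and "card (carrier G) = p ^ m"
    and "card (rcosets\<^bsub>G\<^esub> (grp_center G)) = p ^ 2"
  shows "B_series G =
    (1 - fps_const (of_nat (p ^ (m - 3))) * fps_X) /
    ((1 - fps_const (of_nat (p ^ (m - 2))) * fps_X) * (1 - fps_const (of_nat (p ^ (m - 1))) * fps_X))"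
proof -
  interpret center_index_prime_square G p m
    using assms by (simp add: center_index_prime_square_def center_index_prime_square_axioms_def)
  define P A C where "P = (of_nat p :: rat)" and "A = (of_nat (p ^ (m - 1)) :: rat)"
    and "C = (of_nat (p ^ (m - 2)) :: rat)"
  have "m - 2 = Suc (m - 3)"
    using three_le_m by simp
  then have C: "C = P * of_nat (p ^ (m - 3))"
    unfolding P_def C_def by simp
  have A: "A = P * C"
    unfolding P_def A_def C_def power_m_minus_1_eq by simp
  have "P \<noteq> 0"
    using one_less_p unfolding P_def by simp
  have "B_series G = Abs_fps (\<lambda>n. (P + 1) / P * A ^ n + (- 1 / P) * C ^ n)"
    unfolding B_series_def P_def A_def C_def of_nat_beta ..
  also have "\<dots> =
      (fps_const ((P + 1) / P + - 1 / P) - fps_const ((P + 1) / P * C + - 1 / P * A) * fps_X) /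
      ((1 - fps_const A * fps_X) * (1 - fps_const C * fps_X))"
    by (rule fps_two_geometric)
  also have "(P + 1) / P + - 1 / P = 1"
    using \<open>P \<noteq> 0\<close> by (simp add: field_simps)
  also have "(P + 1) / P * C + - 1 / P * A = of_nat (p ^ (m - 3))"
    using \<open>P \<noteq> 0\<close> unfolding A C by (simp add: field_simps)
  finally show ?thesis
    unfolding A_def C_def by (simp add: mult.commute)
qed

end
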